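(* For every channel $\mathcal{N}\in\mathrm{CPTP}(A\to B)$, with $R$ a replica of $A$, $$\log|B|-D_{\max}(\mathcal{N}\,\|\,\mathcal{R})=\min_{\psi\in\mathrm{Pure}(RA)}H_{\min}(B|R)_{\mathcal{N}^{A\to B}(\psi^{RA})},$$ where $D_{\max}(\mathcal{N}\|\mathcal{R})=\log\min\{t\ge0: t\mathcal{R}-\mathcal{N}\text{ is completely positive}\}$, $\mathcal{R}=\mathcal{R}^{A\to B}$ is the uniform channel $\rho\mapsto\mathrm{Tr}[\rho]\mathbf{u}^B$, and for a bipartite state $\rho^{RB}$, $H_{\min}(B|R)_\rho=-D_{\max}(\rho^{RB}\|\rho^R\otimes I^B)$ with $D_{\max}(\rho\|\sigma)=\log\min\{t: t\sigma\ge\rho\}$.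
   Context: Systems are finite-dimensional, $\mathbf{u}^B=I^B/|B|$, $\log$ base 2; $\mathrm{Pure}(RA)$ is the set of pure states on $RA$; $\mathcal{N}^{A\to B}(\psi^{RA})$ means $(\mathrm{id}^R\otimes\mathcal{N})(\psi^{RA})$. *)

theory Defs
  imports Complex_Main "Jordan_Normal_Form.Matrix"
begin

(* Index convention: the composite system X (dim m) tensor Y (dim d) has basis
   index  i*d + j  for  i < m, j < d. *)

definition mtrace :: "complex mat \<Rightarrow> complex" where
  "mtrace M = (\<Sum>i < dim_row M. M $$ (i, i))"

definition quad_form :: "nat \<Rightarrow> complex mat \<Rightarrow> complex vec \<Rightarrow> complex" where
  "quad_form n M v = (\<Sum>i<n. \<Sum>j<n. cnj (v $ i) * M $$ (i, j) * v $ j)"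

definition psd :: "nat \<Rightarrow> complex mat \<Rightarrow> bool" where
  "psd n M \<longleftrightarrow> M \<in> carrier_mat n n \<and>
     (\<forall>v \<in> carrier_vec n. Im (quad_form n M v) = 0 \<and> Re (quad_form n M v) \<ge> 0)"

definition loewner_le :: "nat \<Rightarrow> complex mat \<Rightarrow> complex mat \<Rightarrow> bool" where
  "loewner_le n A B \<longleftrightarrow> A \<in> carrier_mat n n \<and> B \<in> carrier_mat n n \<and> psd n (B - A)"

definition kron :: "complex mat \<Rightarrow> complex mat \<Rightarrow> complex mat" where
  "kron A B = mat (dim_row A * dim_row B) (dim_col A * dim_col B)
     (\<lambda>(p, q). A $$ (p div dim_row B, q div dim_col B) * B $$ (p mod dim_row B, q mod dim_col B))"

definition ptrace2 :: "nat \<Rightarrow> nat \<Rightarrow> complex mat \<Rightarrow> complex mat" where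
  "ptrace2 m d M = mat m m (\<lambda>(i, j). \<Sum>b<d. M $$ (i * d + b, j * d + b))"

definition block :: "nat \<Rightarrow> complex mat \<Rightarrow> nat \<Rightarrow> nat \<Rightarrow> complex mat" where
  "block d M i j = mat d d (\<lambda>(a, b). M $$ (i * d + a, j * d + b))"

(* (id^X \<otimes> N^{A\<rightarrow>B}) applied to an operator M on X tensor A, dim X = m *)
definition id_tensor :: "nat \<Rightarrow> nat \<Rightarrow> nat \<Rightarrow> (complex mat \<Rightarrow> complex mat) \<Rightarrow> complex mat \<Rightarrow> complex mat" where
  "id_tensor m dA dB N M = mat (m * dB) (m * dB)
     (\<lambda>(p, q). N (block dA M (p div dB) (q div dB)) $$ (p mod dB, q mod dB))"

definition lin_map :: "nat \<Rightarrow> nat \<Rightarrow> (complex mat \<Rightarrow> complex mat) \<Rightarrow> bool" where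
  "lin_map dA dB N \<longleftrightarrow>
     (\<forall>X \<in> carrier_mat dA dA. N X \<in> carrier_mat dB dB) \<and>
     (\<forall>X \<in> carrier_mat dA dA. \<forall>Y \<in> carrier_mat dA dA. N (X + Y) = N X + N Y) \<and>
     (\<forall>X \<in> carrier_mat dA dA. \<forall>c. N (c \<cdot>\<^sub>m X) = c \<cdot>\<^sub>m N X)"

definition CP :: "nat \<Rightarrow> nat \<Rightarrow> (complex mat \<Rightarrow> complex mat) \<Rightarrow> bool" where
  "CP dA dB N \<longleftrightarrow> lin_map dA dB N \<and>
     (\<forall>m M. psd (m * dA) M \<longrightarrow> psd (m * dB) (id_tensor m dA dB N M))"

definition CPTP :: "nat \<Rightarrow> nat \<Rightarrow> (complex mat \<Rightarrow> complex mat) \<Rightarrow> bool" where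
  "CPTP dA dB N \<longleftrightarrow> CP dA dB N \<and> (\<forall>X \<in> carrier_mat dA dA. mtrace (N X) = mtrace X)"

definition unif_chan :: "nat \<Rightarrow> complex mat \<Rightarrow> complex mat" where
  "unif_chan dB X = (mtrace X / of_nat dB) \<cdot>\<^sub>m 1\<^sub>m dB"

definition Dmax :: "nat \<Rightarrow> complex mat \<Rightarrow> complex mat \<Rightarrow> real" where
  "Dmax n \<rho> \<sigma> = log 2 (Inf {t :: real. loewner_le n \<rho> (complex_of_real t \<cdot>\<^sub>m \<sigma>)})"

definition Hmin :: "nat \<Rightarrow> nat \<Rightarrow> complex mat \<Rightarrow> real" where
  "Hmin dR dB \<rho> = - Dmax (dR * dB) \<rho> (kron (ptrace2 dR dB \<rho>) (1\<^sub>m dB))"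

definition Dmax_chan :: "nat \<Rightarrow> nat \<Rightarrow> (complex mat \<Rightarrow> complex mat) \<Rightarrow> real" where
  "Dmax_chan dA dB N = log 2 (Inf {t :: real. t \<ge> 0 \<and>
      CP dA dB (\<lambda>X. complex_of_real t \<cdot>\<^sub>m unif_chan dB X - N X)})"

definition outer :: "complex vec \<Rightarrow> complex mat" where
  "outer v = mat (dim_vec v) (dim_vec v) (\<lambda>(i, j). v $ i * cnj (v $ j))"

definition Pure :: "nat \<Rightarrow> nat \<Rightarrow> complex mat set" where
  "Pure dR dA = {outer v | v. v \<in> carrier_vec (dR * dA) \<and> (\<Sum>i < dR * dA. (cmod (v $ i))\<^sup>2) = 1}"

end

theory Submission
  imports Defs "HOL-Library.Complex_Order"
begin

text \<open>
  Let \<open>J\<close> be the unnormalised Choi matrix of \<open>N\<close> and \<open>N_s X = s Tr[X] I - N X\<close> (\<open>shifted_map\<close>), so that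
  \<open>t \<R> - N = N_(t/|B|)\<close>. By Choi's theorem \<open>N_s\<close> is completely positive iff \<open>s I - J\<close> is
  positive semidefinite. As \<open>N\<close> is trace preserving, for \<open>\<rho> = (id \<otimes> N)(\<psi>)\<close> the operator
  \<open>\<rho>\<^sup>R \<otimes> I\<^sup>B\<close> equals \<open>(id \<otimes> Tr[-] I)(\<psi>)\<close>, so \<open>\<rho> \<le> s \<rho>\<^sup>R \<otimes> I\<^sup>B\<close> says exactly that
  \<open>(id \<otimes> N_s)(\<psi>)\<close> is positive. Hence every \<open>s\<close> feasible for the channel is feasible for every
  pure state, and for the maximally entangled state \<open>(id \<otimes> N_s)(\<psi>)\<close> is a positive multiple of
  the Choi matrix of \<open>N_s\<close>, so there the two feasible sets (\<open>choi_levels\<close>, \<open>hmin_levels\<close>) coincide. Taking traces shows that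
  every feasible \<open>s\<close> is at least \<open>1/|B|\<close>, so all logarithms involved are of positive numbers.
\<close>

lemma sum_lessThan_mult_split:
  "(\<Sum>P<m*d. f P) = (\<Sum>p<m. \<Sum>b<d. f (p*d+b))" for f :: "nat \<Rightarrow> 'a::comm_monoid_add"
proof (induction m)
  case 0 then show ?case by simp
next
  case (Suc m)
  have "{..<Suc m * d} = {..<m*d} \<union> {m*d..<m*d+d}" by auto
  then have "(\<Sum>P<Suc m*d. f P) = (\<Sum>P<m*d. f P) + (\<Sum>P\<in>{m*d..<m*d+d}. f P)"
    by (simp add: sum.union_disjoint ivl_disj_int)
  also have "(\<Sum>P\<in>{m*d..<m*d+d}. f P) = (\<Sum>b<d. f (m*d+b))"
    by (rule sum.reindex_bij_witness[of _ "\<lambda>b. m*d + b" "\<lambda>P. P - m*d"]) auto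
  finally show ?case using Suc by simp
qed

lemma index_div [simp]: "b < d \<Longrightarrow> (p*d+b) div d = p" for b d p :: nat
  by (simp add: add.commute[of "p*d" b])

lemma index_mod [simp]: "b < d \<Longrightarrow> (p*d+b) mod d = b" for b d p :: nat
  by (simp add: add.commute[of "p*d" b])

lemma index_less: "p < m \<Longrightarrow> b < d \<Longrightarrow> p*d+b < m*d" for b d p m :: nat
  using mult_le_mono1[of "Suc p" m d] by simp

lemma index_eq_iff: "K = L \<longleftrightarrow> K div d = L div d \<and> K mod d = L mod d" for K L d :: nat
  by (metis div_mult_mod_eq)

lemma sum_single_nonzero:
  "i < n \<Longrightarrow> (\<forall>k<n. k \<noteq> i \<longrightarrow> f k = 0) \<Longrightarrow> (\<Sum>k<n. f k) = f i"
  for f :: "nat \<Rightarrow> 'a::comm_monoid_add"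
  by (subst sum.remove[of _ i]) (auto intro!: sum.neutral)

lemma sum_two_nonzero:
  fixes f :: "nat \<Rightarrow> 'a::comm_monoid_add"
  assumes "i < n" "j < n" "i \<noteq> j" "\<forall>k<n. k \<noteq> i \<and> k \<noteq> j \<longrightarrow> f k = 0"
  shows "(\<Sum>k<n. f k) = f i + f j"
proof -
  have "(\<Sum>k<n. f k) = (\<Sum>k\<in>{i,j}. f k)"
    by (rule sum.mono_neutral_right) (use assms in auto)
  then show ?thesis using assms by simp
qed

section \<open>Positive semidefinite matrices\<close>

lemma complex_nonneg_iff: "(0::complex) \<le> z \<longleftrightarrow> Im z = 0 \<and> Re z \<ge> 0"
  by (auto simp: less_eq_complex_def)

lemma cnj_mult_self_nonneg: "0 \<le> cnj z * z"
  using complex_norm_square[of z] by (simp add: mult.commute complex_nonneg_iff)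

lemma psd_iff_quad_form_nonneg:
  "psd n M \<longleftrightarrow> M \<in> carrier_mat n n \<and> (\<forall>v\<in>carrier_vec n. 0 \<le> quad_form n M v)"
  by (auto simp: psd_def complex_nonneg_iff)

lemma quad_form_unit:
  "i < n \<Longrightarrow> quad_form n M (vec n (\<lambda>l. if l = i then a else 0)) = cnj a * M$$(i,i) * a"
  unfolding quad_form_def
  by (subst sum_single_nonzero[of i], simp, simp, subst sum_single_nonzero[of i], auto)

lemma quad_form_two_units:
  "i < n \<Longrightarrow> j < n \<Longrightarrow> i \<noteq> j \<Longrightarrow>
   quad_form n M (vec n (\<lambda>l. if l = i then a else if l = j then c else 0)) =
   cnj a * M$$(i,i) * a + cnj a * M$$(i,j) * c + (cnj c * M$$(j,i) * a + cnj c * M$$(j,j) * c)"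
  unfolding quad_form_def
  by (subst sum_two_nonzero[of i _ j], simp_all, subst sum_two_nonzero[of i _ j], simp_all)

lemma quad_form_scale: "quad_form n M (vec n (\<lambda>K. c * w$K)) = cnj c * c * quad_form n M w"
  by (simp add: quad_form_def sum_distrib_left mult_ac)

lemma psd_diag_nonneg:
  assumes "psd n M" "i < n"
  shows "0 \<le> M$$(i,i)"
proof -
  have "0 \<le> quad_form n M (vec n (\<lambda>l. if l = i then 1 else 0))"
    using assms by (simp add: psd_iff_quad_form_nonneg)
  then show ?thesis using quad_form_unit[of i n M 1] assms by simp
qed

lemma psd_hermitian:
  assumes "psd n M" "i < n" "j < n"
  shows "M$$(j,i) = cnj (M$$(i,j))"
proof (cases "i = j")
  case True
  then show ?thesis
    using psd_diag_nonneg[OF assms(1,2)] by (auto simp: complex_nonneg_iff complex_eq_iff)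
next
  case False
  have diag: "0 \<le> M$$(i,i)" "0 \<le> M$$(j,j)" using psd_diag_nonneg assms by auto
  have "0 \<le> quad_form n M (vec n (\<lambda>l. if l = i then 1 else if l = j then c else 0))" for c
    using assms by (auto simp: psd_iff_quad_form_nonneg)
  from this[of 1] this[of \<i>] show ?thesis
    using diag quad_form_two_units[OF assms(2,3) False, of M 1]
    by (auto simp: complex_nonneg_iff complex_eq_iff)
qed

lemma psd_zero_diag_row:
  assumes M: "psd n M" and k: "k < n" and j: "j < n" and Mkk: "M$$(k,k) = 0"
  shows "M$$(k,j) = 0"
proof (rule ccontr)
  define y where "y = M$$(k,j)"
  assume "M$$(k,j) \<noteq> 0"
  then have y: "y \<noteq> 0" and kj: "k \<noteq> j" using Mkk y_def by auto
  have herm: "M$$(j,k) = cnj y" using psd_hermitian[OF M k j] y_def by simp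
  \<comment> \<open>moving far enough along \<open>e\<^sub>j - s y e\<^sub>k\<close> makes the quadratic form negative\<close>
  define s where "s = (Re (M$$(j,j)) + 1) / (cmod y)^2"
  define c where "c = - complex_of_real s * y"
  have "0 \<le> quad_form n M (vec n (\<lambda>l. if l = j then 1 else if l = k then c else 0))"
    using M by (auto simp: psd_iff_quad_form_nonneg)
  also have "\<dots> = M$$(j,j) + cnj y * c + cnj c * y"
    using quad_form_two_units[OF j k kj[symmetric], of M 1 c] Mkk herm y_def by simp
  also have "\<dots> = M$$(j,j) - complex_of_real (2 * s * (cmod y)^2)"
    using complex_norm_square[of y] by (simp add: c_def algebra_simps)
  also have "2 * s * (cmod y)^2 = 2 * (Re (M$$(j,j)) + 1)"
    using y by (simp add: s_def)
  finally show False
    using psd_diag_nonneg[OF M j] by (simp add: complex_nonneg_iff)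
qed

definition sesq_form :: "nat \<Rightarrow> complex mat \<Rightarrow> (nat \<Rightarrow> complex) \<Rightarrow> (nat \<Rightarrow> complex) \<Rightarrow> complex" where
  "sesq_form n M f g = (\<Sum>i<n. \<Sum>j<n. cnj (f i) * M$$(i,j) * g j)"

lemma sesq_form_add:
  "sesq_form n M (\<lambda>i. f i + g i) (\<lambda>i. f i + g i) =
   sesq_form n M f f + sesq_form n M f g + sesq_form n M g f + sesq_form n M g g"
  by (simp add: sesq_form_def algebra_simps sum.distrib)

lemma sesq_form_unit_right:
  "k < n \<Longrightarrow> sesq_form n M f (\<lambda>j. if j = k then c else 0) = (\<Sum>i<n. cnj (f i) * M$$(i,k)) * c"
  unfolding sesq_form_def sum_distrib_right
  by (rule sum.cong, simp, subst sum_single_nonzero[of k], auto)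

lemma sesq_form_unit_left:
  "k < n \<Longrightarrow> sesq_form n M (\<lambda>j. if j = k then c else 0) g = cnj c * (\<Sum>j<n. M$$(k,j) * g j)"
  unfolding sesq_form_def sum_distrib_left
  by (subst sum_single_nonzero[of k], auto simp: mult.assoc)

lemma quad_form_add_unit:
  assumes M: "psd n M" and k: "k < n" and y: "y = (\<Sum>j<n. M$$(k,j) * v$j)"
  shows "quad_form n M (vec n (\<lambda>i. v$i + (if i = k then c else 0))) =
    quad_form n M v + cnj y * c + cnj c * y + cnj c * M$$(k,k) * c"
proof -
  define e where "e i = (if i = k then c else 0)" for i
  have cnj_y: "(\<Sum>i<n. cnj (v$i) * M$$(i,k)) = cnj y"
    unfolding y by (simp add: psd_hermitian[OF M _ k] mult.commute)
  have "quad_form n M (vec n (\<lambda>i. v$i + e i)) = sesq_form n M (\<lambda>i. v$i + e i) (\<lambda>i. v$i + e i)"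
    by (simp add: quad_form_def sesq_form_def)
  also have "\<dots> = sesq_form n M (($) v) (($) v) + sesq_form n M (($) v) e
      + sesq_form n M e (($) v) + sesq_form n M e e"
    by (rule sesq_form_add)
  also have "sesq_form n M (($) v) (($) v) = quad_form n M v"
    by (simp add: quad_form_def sesq_form_def)
  also have "sesq_form n M (($) v) e = cnj y * c"
    unfolding e_def sesq_form_unit_right[OF k] cnj_y ..
  also have "sesq_form n M e (($) v) = cnj c * y"
    unfolding e_def sesq_form_unit_left[OF k] y ..
  also have "sesq_form n M e e = cnj c * M$$(k,k) * c"
    using quad_form_unit[OF k, of M c] by (simp add: quad_form_def sesq_form_def e_def)
  finally show ?thesis
    unfolding e_def .
qed

lemma outer_carrier: "u \<in> carrier_vec n \<Longrightarrow> outer u \<in> carrier_mat n n"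
  by (simp add: outer_def)

lemma outer_dim [simp]: "dim_row (outer u) = dim_vec u" "dim_col (outer u) = dim_vec u"
  by (simp_all add: outer_def)

lemma outer_index: "i < dim_vec u \<Longrightarrow> j < dim_vec u \<Longrightarrow> outer u $$ (i,j) = u$i * cnj (u$j)"
  by (simp add: outer_def)

lemma outer_index_blocks:
  "dim_vec u = m*d \<Longrightarrow> p < m \<Longrightarrow> q < m \<Longrightarrow> a < d \<Longrightarrow> a' < d \<Longrightarrow>
   outer u $$ (p*d+a, q*d+a') = u$(p*d+a) * cnj (u$(q*d+a'))"
  by (simp add: outer_index index_less)

lemma psd_outer:
  assumes u: "u \<in> carrier_vec n"
  shows "psd n (outer u)"
  unfolding psd_iff_quad_form_nonneg
proof (intro conjI ballI outer_carrier[OF u])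
  fix v :: "complex vec" assume "v \<in> carrier_vec n"
  have "quad_form n (outer u) v = (\<Sum>i<n. \<Sum>j<n. (cnj (v$i) * u$i) * (cnj (u$j) * v$j))"
    unfolding quad_form_def using u by (intro sum.cong refl) (simp add: outer_index mult_ac)
  also have "\<dots> = cnj (\<Sum>j<n. cnj (u$j) * v$j) * (\<Sum>j<n. cnj (u$j) * v$j)"
    by (simp add: sum_product mult.commute)
  finally show "0 \<le> quad_form n (outer u) v"
    by (simp only: cnj_mult_self_nonneg)
qed

text \<open>Subtracting \<open>outer (pivot_vec n M k)\<close> is one step of a Cholesky factorisation of \<open>M\<close>.\<close>

definition pivot_vec :: "nat \<Rightarrow> complex mat \<Rightarrow> nat \<Rightarrow> complex vec" where
  "pivot_vec n M k = vec n (\<lambda>i. M$$(i,k) / complex_of_real (sqrt (Re (M$$(k,k)))))"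

lemma pivot_vec_carrier [simp]: "pivot_vec n M k \<in> carrier_vec n"
  by (simp add: pivot_vec_def)

lemma minus_pivot_index:
  assumes M: "psd n M" and k: "k < n" and ij: "i < n" "j < n"
  shows "(M - outer (pivot_vec n M k))$$(i,j) = M$$(i,j) - M$$(i,k) * M$$(k,j) / M$$(k,k)"
proof -
  define s where "s = complex_of_real (sqrt (Re (M$$(k,k))))"
  have "0 \<le> M$$(k,k)" using psd_diag_nonneg M k by blast
  then have s: "cnj s = s" "s * s = M$$(k,k)"
    by (auto simp: s_def complex_nonneg_iff complex_eq_iff)
  have "(M - outer (pivot_vec n M k))$$(i,j) = M$$(i,j) - M$$(i,k) / s * cnj (M$$(j,k) / s)"
    using ij M by (simp add: pivot_vec_def outer_def s_def psd_iff_quad_form_nonneg)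
  also have "\<dots> = M$$(i,j) - M$$(i,k) * M$$(k,j) / M$$(k,k)"
    using psd_hermitian[OF M k ij(2)] s by (simp add: times_divide_times_eq)
  finally show ?thesis .
qed

lemma minus_pivot_zero_rows:
  assumes M: "psd n M" and k: "k < n" and Mkk: "M$$(k,k) \<noteq> 0"
    and Z: "\<forall>i<n. \<forall>j<n. (i < k \<or> j < k) \<longrightarrow> M$$(i,j) = 0"
  shows "\<forall>i<n. \<forall>j<n. (i < Suc k \<or> j < Suc k) \<longrightarrow> (M - outer (pivot_vec n M k))$$(i,j) = 0"
proof (intro allI impI)
  fix i j assume ij: "i < n" "j < n" "i < Suc k \<or> j < Suc k"
  then consider "i < k" | "j < k" | "i = k" | "j = k" by linarith
  then show "(M - outer (pivot_vec n M k))$$(i,j) = 0"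
    by cases (use Z ij k Mkk in \<open>simp_all add: minus_pivot_index[OF M k]\<close>)
qed

lemma psd_minus_pivot:
  assumes M: "psd n M" and k: "k < n" and Mkk: "M$$(k,k) \<noteq> 0"
  shows "psd n (M - outer (pivot_vec n M k))"
  unfolding psd_iff_quad_form_nonneg
proof (intro conjI ballI)
  show "M - outer (pivot_vec n M k) \<in> carrier_mat n n"
    by (intro minus_carrier_mat outer_carrier pivot_vec_carrier)
  fix v :: "complex vec" assume v: "v \<in> carrier_vec n"
  define y where "y = (\<Sum>j<n. M$$(k,j) * v$j)"
  define c where "c = - y / M$$(k,k)"
  \<comment> \<open>the value of the form of \<open>M\<close> at \<open>v + c e\<^sub>k\<close>, minimised over \<open>c\<close>\<close>
  have "0 \<le> quad_form n M (vec n (\<lambda>i. v$i + (if i = k then c else 0)))"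
    using M by (simp add: psd_iff_quad_form_nonneg)
  also have "\<dots> = quad_form n M v - cnj y * y / M$$(k,k)"
    using Mkk by (simp add: quad_form_add_unit[OF M k y_def] c_def field_simps)
  also have "\<dots> = quad_form n (M - outer (pivot_vec n M k)) v"
  proof -
    have "quad_form n (M - outer (pivot_vec n M k)) v = (\<Sum>i<n. \<Sum>j<n. cnj (v$i) * M$$(i,j) * v$j
        - (cnj (v$i) * M$$(i,k)) * (M$$(k,j) * v$j) / M$$(k,k))"
      unfolding quad_form_def by (intro sum.cong refl) (simp add: minus_pivot_index[OF M k] algebra_simps)
    also have "\<dots> = quad_form n M v
        - (\<Sum>i<n. cnj (v$i) * M$$(i,k)) * (\<Sum>j<n. M$$(k,j) * v$j) / M$$(k,k)"
      by (simp add: quad_form_def sum_subtractf sum_product sum_divide_distrib)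
    also have "(\<Sum>i<n. cnj (v$i) * M$$(i,k)) = cnj y"
      unfolding y_def by (simp add: psd_hermitian[OF M _ k] mult.commute)
    finally show ?thesis by (simp add: y_def)
  qed
  finally show "0 \<le> quad_form n (M - outer (pivot_vec n M k)) v" .
qed

lemma psd_sum_rank_one:
  assumes "psd n M"
  shows "\<exists>(r::nat) U. (\<forall>l<r. U l \<in> carrier_vec n) \<and>
    (\<forall>i<n. \<forall>j<n. M$$(i,j) = (\<Sum>l<r. U l $ i * cnj (U l $ j)))"
proof -
  have "\<forall>M. psd n M \<longrightarrow> (\<forall>i<n. \<forall>j<n. (i < k \<or> j < k) \<longrightarrow> M$$(i,j) = 0) \<longrightarrow>
     (\<exists>(r::nat) U. (\<forall>l<r. U l \<in> carrier_vec n) \<and>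
       (\<forall>i<n. \<forall>j<n. M$$(i,j) = (\<Sum>l<r. U l $ i * cnj (U l $ j))))" if "k \<le> n" for k
    using that
  proof (induction k rule: inc_induct)
    case base
    show ?case by (intro allI impI exI[of _ 0]) auto
  next
    case (step k)
    show ?case
    proof (intro allI impI)
      fix M assume M: "psd n M" and Z: "\<forall>i<n. \<forall>j<n. (i < k \<or> j < k) \<longrightarrow> M$$(i,j) = 0"
      have k: "k < n" using step by simp
      show "\<exists>(r::nat) U. (\<forall>l<r. U l \<in> carrier_vec n) \<and>
          (\<forall>i<n. \<forall>j<n. M$$(i,j) = (\<Sum>l<r. U l $ i * cnj (U l $ j)))"
      proof (cases "M$$(k,k) = 0")
        case True
        have "\<forall>i<n. \<forall>j<n. (i < Suc k \<or> j < Suc k) \<longrightarrow> M$$(i,j) = 0"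
          using Z psd_zero_diag_row[OF M k _ True] psd_hermitian[OF M k]
          by (metis complex_cnj_zero less_Suc_eq)
        then show ?thesis using step.IH M by blast
      next
        case False
        define u where "u = pivot_vec n M k"
        obtain r :: nat and U where U: "\<forall>l<r. U l \<in> carrier_vec n"
          "\<forall>i<n. \<forall>j<n. (M - outer u)$$(i,j) = (\<Sum>l<r. U l $ i * cnj (U l $ j))"
          using step.IH psd_minus_pivot[OF M k False] minus_pivot_zero_rows[OF M k False Z]
          unfolding u_def by blast
        have Mc: "M \<in> carrier_mat n n" using M by (simp add: psd_iff_quad_form_nonneg)
        have "M$$(i,j) = (M - outer u)$$(i,j) + u$i * cnj (u$j)" if "i < n" "j < n" for i j
          using that Mc by (simp add: u_def outer_def pivot_vec_def)
        then have "\<forall>i<n. \<forall>j<n. M$$(i,j) = (\<Sum>l<Suc r. (U(r := u)) l $ i * cnj ((U(r := u)) l $ j))"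
          using U(2) by simp
        moreover have "\<forall>l<Suc r. (U(r := u)) l \<in> carrier_vec n"
          using U(1) by (auto simp: u_def less_Suc_eq)
        ultimately show ?thesis by blast
      qed
    qed
  qed
  then show ?thesis using assms by blast
qed

section \<open>The Choi matrix\<close>

definition matrix_unit :: "nat \<Rightarrow> nat \<Rightarrow> nat \<Rightarrow> complex mat" where
  "matrix_unit d a a' = mat d d (\<lambda>(i,j). if i = a \<and> j = a' then 1 else 0)"

definition choi :: "nat \<Rightarrow> nat \<Rightarrow> (complex mat \<Rightarrow> complex mat) \<Rightarrow> complex mat" where
  "choi dA dB L = mat (dA*dB) (dA*dB)
     (\<lambda>(K,K'). L (matrix_unit dA (K div dB) (K' div dB)) $$ (K mod dB, K' mod dB))"

text \<open>Reshaping \<open>u\<close> into the \<open>m \<times> dA\<close> matrix \<open>Y\<close> gives \<open>(id \<otimes> L)(u u\<^sup>*) = (Y \<otimes> I) J (Y \<otimes> I)\<^sup>*\<close>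
  for the Choi matrix \<open>J\<close> of \<open>L\<close>; \<open>choi_vec m dA dB u w\<close> is \<open>(Y \<otimes> I)\<^sup>* w\<close>.\<close>

definition choi_vec :: "nat \<Rightarrow> nat \<Rightarrow> nat \<Rightarrow> complex vec \<Rightarrow> complex vec \<Rightarrow> complex vec" where
  "choi_vec m dA dB u w =
     vec (dA*dB) (\<lambda>K. \<Sum>q<m. cnj (u $ (q*dA + K div dB)) * w $ (q*dB + K mod dB))"

lemma matrix_unit_carrier [simp]: "matrix_unit d a a' \<in> carrier_mat d d"
  by (simp add: matrix_unit_def)

lemma choi_carrier [simp]: "choi dA dB L \<in> carrier_mat (dA*dB) (dA*dB)"
  by (simp add: choi_def)

lemma choi_index:
  "a < dA \<Longrightarrow> b < dB \<Longrightarrow> a' < dA \<Longrightarrow> b' < dB \<Longrightarrow>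
   choi dA dB L $$ (a*dB+b, a'*dB+b') = L (matrix_unit dA a a') $$ (b,b')"
  by (simp add: choi_def index_less)

lemma choi_vec_carrier [simp]: "choi_vec m dA dB u w \<in> carrier_vec (dA*dB)"
  by (simp add: choi_vec_def)

lemma block_carrier [simp]: "block d M i j \<in> carrier_mat d d"
  by (simp add: block_def)

lemma id_tensor_carrier [simp]: "id_tensor m dA dB L M \<in> carrier_mat (m*dB) (m*dB)"
  by (simp add: id_tensor_def)

lemma id_tensor_index:
  "P < m*dB \<Longrightarrow> Q < m*dB \<Longrightarrow>
   id_tensor m dA dB L M $$ (P,Q) = L (block dA M (P div dB) (Q div dB)) $$ (P mod dB, Q mod dB)"
  by (simp add: id_tensor_def)

lemma lin_map_carrier: "lin_map dA dB N \<Longrightarrow> X \<in> carrier_mat dA dA \<Longrightarrow> N X \<in> carrier_mat dB dB"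
  by (simp add: lin_map_def)

lemma lin_map_matrix_unit_expansion:
  assumes lin: "lin_map dA dB L" and X: "X \<in> carrier_mat dA dA" and b: "b < dB" "b' < dB"
  shows "L X $$ (b,b') = (\<Sum>a<dA. \<Sum>a'<dA. X$$(a,a') * L (matrix_unit dA a a') $$ (b,b'))"
proof -
  define XS where "XS S = mat dA dA (\<lambda>(i,j). if (i,j) \<in> S then X$$(i,j) else 0)" for S
  have add: "\<And>Y Z. Y \<in> carrier_mat dA dA \<Longrightarrow> Z \<in> carrier_mat dA dA \<Longrightarrow> L (Y + Z) = L Y + L Z"
   and smult: "\<And>c Y. Y \<in> carrier_mat dA dA \<Longrightarrow> L (c \<cdot>\<^sub>m Y) = c \<cdot>\<^sub>m L Y"
    using lin unfolding lin_map_def by auto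
  have carrier: "L (matrix_unit dA a a') \<in> carrier_mat dB dB" "L (XS S) \<in> carrier_mat dB dB" for a a' S
    by (auto intro: lin_map_carrier[OF lin] simp: XS_def)
  have partial: "L (XS S) $$ (b,b') = (\<Sum>(a,a')\<in>S. X$$(a,a') * L (matrix_unit dA a a') $$ (b,b'))"
    if "finite S" "S \<subseteq> {..<dA} \<times> {..<dA}" for S
    using that
  proof (induction S rule: finite_induct)
    case empty
    have "XS {} = 0 \<cdot>\<^sub>m matrix_unit dA 0 0" by (rule eq_matI) (auto simp: XS_def matrix_unit_def)
    then show ?case using smult carrier_matD[OF carrier(1)[of 0 0]] b by simp
  next
    case (insert s S)
    obtain a a' where s: "s = (a,a')" by force
    have "XS (insert s S) = XS S + X$$(a,a') \<cdot>\<^sub>m matrix_unit dA a a'"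
      by (rule eq_matI) (use insert s in \<open>auto simp: XS_def matrix_unit_def\<close>)
    then have "L (XS (insert s S)) = L (XS S) + X$$(a,a') \<cdot>\<^sub>m L (matrix_unit dA a a')"
      using add smult by (simp add: XS_def)
    then show ?case
      using insert s carrier_matD[OF carrier(1)[of a a']] carrier_matD[OF carrier(2)[of S]] b
      by simp
  qed
  have "XS ({..<dA} \<times> {..<dA}) = X" by (rule eq_matI) (use X in \<open>auto simp: XS_def\<close>)
  then have "L X $$ (b,b') = (\<Sum>(a,a')\<in>{..<dA} \<times> {..<dA}. X$$(a,a') * L (matrix_unit dA a a') $$ (b,b'))"
    using partial[of "{..<dA} \<times> {..<dA}"] by simp
  then show ?thesis by (simp add: sum.cartesian_product)
qed

lemma quad_form_mult_split:
  "quad_form (m*d) M w = (\<Sum>p<m. \<Sum>b<d. \<Sum>q<m. \<Sum>b'<d.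
     cnj (w$(p*d+b)) * M$$(p*d+b, q*d+b') * w$(q*d+b'))"
  unfolding quad_form_def by (simp add: sum_lessThan_mult_split)

lemma quad_form_id_tensor:
  assumes "lin_map dA dB L"
  shows "quad_form (m*dB) (id_tensor m dA dB L M) w =
    (\<Sum>p<m. \<Sum>b<dB. \<Sum>q<m. \<Sum>b'<dB. cnj (w$(p*dB+b)) *
      (\<Sum>a<dA. \<Sum>a'<dA. M$$(p*dA+a, q*dA+a') * L (matrix_unit dA a a') $$ (b,b')) * w$(q*dB+b'))"
  unfolding quad_form_mult_split
  by (intro sum.cong refl)
    (simp add: id_tensor_index index_less lin_map_matrix_unit_expansion[OF assms] block_def)

lemma quad_form_id_tensor_outer:
  assumes lin: "lin_map dA dB L" and u: "dim_vec u = m*dA"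
  shows "quad_form (m*dB) (id_tensor m dA dB L (outer u)) w =
    quad_form (dA*dB) (choi dA dB L) (choi_vec m dA dB u w)"
proof -
  define F where "F p b q b' a a' = cnj (w$(p*dB+b)) * u$(p*dA+a) * cnj (u$(q*dA+a')) *
      L (matrix_unit dA a a') $$ (b,b') * w$(q*dB+b')" for p b q b' a a'
  have "quad_form (m*dB) (id_tensor m dA dB L (outer u)) w =
      (\<Sum>p<m. \<Sum>b<dB. \<Sum>q<m. \<Sum>b'<dB. \<Sum>a<dA. \<Sum>a'<dA. F p b q b' a a')"
    unfolding quad_form_id_tensor[OF lin] sum_distrib_left sum_distrib_right
    by (intro sum.cong refl) (simp add: F_def outer_index_blocks[OF u] mult_ac)
  also have "\<dots> = (\<Sum>a<dA. \<Sum>b<dB. \<Sum>a'<dA. \<Sum>b'<dB. \<Sum>p<m. \<Sum>q<m. F p b q b' a a')"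
    by (simp only: sum.swap[of _ "{..<dA}" "{..<dB}"] sum.swap[of _ "{..<dA}" "{..<m}"]
        sum.swap[of _ "{..<dB}" "{..<m}"])
  also have "\<dots> = quad_form (dA*dB) (choi dA dB L) (choi_vec m dA dB u w)"
    unfolding quad_form_mult_split[of dA dB]
    by (intro sum.cong refl)
      (simp add: choi_index index_less choi_vec_def sum_product sum_distrib_left F_def mult_ac)
  finally show ?thesis .
qed

lemma choi_psd_imp_CP:
  assumes lin: "lin_map dA dB L" and J: "psd (dA*dB) (choi dA dB L)"
  shows "CP dA dB L"
  unfolding CP_def
proof (intro conjI lin allI impI)
  fix m M assume M: "psd (m*dA) M"
  obtain r :: nat and U where U: "\<forall>l<r. U l \<in> carrier_vec (m*dA)"
    "\<forall>i<m*dA. \<forall>j<m*dA. M$$(i,j) = (\<Sum>l<r. U l $ i * cnj (U l $ j))"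
    using psd_sum_rank_one[OF M] by blast
  have M_rank_one: "M$$(i,j) = (\<Sum>l<r. outer (U l) $$ (i,j))" if "i < m*dA" "j < m*dA" for i j
  proof -
    have "M$$(i,j) = (\<Sum>l<r. U l $ i * cnj (U l $ j))" using U(2) that by blast
    also have "\<dots> = (\<Sum>l<r. outer (U l) $$ (i,j))"
      using that by (intro sum.cong refl) (metis U(1) carrier_vecD lessThan_iff outer_index)
    finally show ?thesis .
  qed
  have linear: "(\<Sum>p\<in>P. \<Sum>b\<in>B. \<Sum>q\<in>P. \<Sum>b'\<in>B.
        W p b * (\<Sum>a\<in>A. \<Sum>a'\<in>A. (\<Sum>l<r'. g l p q a a') * C a a' b b') * W' q b') =
      (\<Sum>l<r'. \<Sum>p\<in>P. \<Sum>b\<in>B. \<Sum>q\<in>P. \<Sum>b'\<in>B.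
        W p b * (\<Sum>a\<in>A. \<Sum>a'\<in>A. g l p q a a' * C a a' b b') * W' q b')"
    for P B A :: "nat set" and W W' :: "nat \<Rightarrow> nat \<Rightarrow> complex" and g C and r' :: nat
    by (induction r') (simp_all add: sum.distrib distrib_left distrib_right)
  show "psd (m*dB) (id_tensor m dA dB L M)"
    unfolding psd_iff_quad_form_nonneg
  proof (intro conjI ballI id_tensor_carrier)
    fix w :: "complex vec"
    have "quad_form (m*dB) (id_tensor m dA dB L M) w =
        (\<Sum>p<m. \<Sum>b<dB. \<Sum>q<m. \<Sum>b'<dB. cnj (w$(p*dB+b)) * (\<Sum>a<dA. \<Sum>a'<dA.
          (\<Sum>l<r. outer (U l) $$ (p*dA+a, q*dA+a')) * L (matrix_unit dA a a') $$ (b,b')) *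
          w$(q*dB+b'))"
      unfolding quad_form_id_tensor[OF lin] using M_rank_one by (intro sum.cong refl) (simp add: index_less)
    also have "\<dots> = (\<Sum>l<r. quad_form (m*dB) (id_tensor m dA dB L (outer (U l))) w)"
      unfolding quad_form_id_tensor[OF lin] by (rule linear)
    also have "\<dots> = (\<Sum>l<r. quad_form (dA*dB) (choi dA dB L) (choi_vec m dA dB (U l) w))"
      using U(1) by (intro sum.cong refl) (simp add: quad_form_id_tensor_outer[OF lin])
    finally show "0 \<le> quad_form (m*dB) (id_tensor m dA dB L M) w"
      using J by (simp add: psd_iff_quad_form_nonneg sum_nonneg)
  qed
qed

definition diag_vec :: "nat \<Rightarrow> complex \<Rightarrow> complex vec" where
  "diag_vec d s = vec (d*d) (\<lambda>P. if P div d = P mod d then s else 0)"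

lemma choi_vec_diag_vec:
  assumes w: "w \<in> carrier_vec (d*dB)"
  shows "choi_vec d d dB (diag_vec d s) w = vec (d*dB) (\<lambda>K. cnj s * w$K)"
proof (rule eq_vecI)
  fix K assume "K < dim_vec (vec (d*dB) (\<lambda>K. cnj s * w$K))"
  then have K: "K < d*dB" by simp
  have Kd: "K div dB < d" using K by (simp add: less_mult_imp_div_less)
  have "choi_vec d d dB (diag_vec d s) w $ K
      = (\<Sum>q<d. cnj (diag_vec d s $ (q*d + K div dB)) * w $ (q*dB + K mod dB))"
    using K by (simp add: choi_vec_def)
  also have "\<dots> = (\<Sum>q<d. if q = K div dB then cnj s * w $ (q*dB + K mod dB) else 0)"
    using Kd by (intro sum.cong refl) (simp add: diag_vec_def index_less)
  also have "\<dots> = cnj s * w $ K" using Kd by simp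
  finally show "choi_vec d d dB (diag_vec d s) w $ K = vec (d*dB) (\<lambda>K. cnj s * w$K) $ K"
    using K by simp
qed (simp add: choi_vec_def)

lemma quad_form_id_tensor_diag_vec:
  assumes lin: "lin_map d dB L" and w: "w \<in> carrier_vec (d*dB)"
  shows "quad_form (d*dB) (id_tensor d d dB L (outer (diag_vec d s))) w =
    cnj s * s * quad_form (d*dB) (choi d dB L) w"
  using quad_form_id_tensor_outer[OF lin, of "diag_vec d s" d w] choi_vec_diag_vec[OF w, of s]
  by (simp add: diag_vec_def quad_form_scale mult.commute)

lemma psd_id_tensor_diag_vec_iff:
  assumes lin: "lin_map d dB L" and s: "s \<noteq> 0"
  shows "psd (d*dB) (id_tensor d d dB L (outer (diag_vec d s))) \<longleftrightarrow> psd (d*dB) (choi d dB L)"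
proof -
  obtain r where r: "cnj s * s = complex_of_real r" "r > 0"
    using s complex_norm_square[of s] by (metis mult.commute of_real_power zero_less_norm_iff zero_less_power)
  have "0 \<le> complex_of_real r * z \<longleftrightarrow> 0 \<le> z" for z
    using r(2) by (simp add: complex_nonneg_iff zero_le_mult_iff)
  then show ?thesis
    by (simp add: psd_iff_quad_form_nonneg quad_form_id_tensor_diag_vec[OF lin] r(1))
qed

lemma CP_iff_choi_psd:
  assumes lin: "lin_map dA dB L"
  shows "CP dA dB L \<longleftrightarrow> psd (dA*dB) (choi dA dB L)"
proof
  assume "CP dA dB L"
  moreover have "psd (dA*dA) (outer (diag_vec dA 1))" by (rule psd_outer) (simp add: diag_vec_def)
  ultimately have "psd (dA*dB) (id_tensor dA dA dB L (outer (diag_vec dA 1)))"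
    by (simp add: CP_def)
  then show "psd (dA*dB) (choi dA dB L)" using psd_id_tensor_diag_vec_iff[OF lin] by simp
qed (rule choi_psd_imp_CP[OF lin])

section \<open>The maps \<open>s Tr[X] I - N X\<close>\<close>

definition shifted_map :: "nat \<Rightarrow> (complex mat \<Rightarrow> complex mat) \<Rightarrow> complex \<Rightarrow> complex mat \<Rightarrow> complex mat" where
  "shifted_map dB N s X = s \<cdot>\<^sub>m (mtrace X \<cdot>\<^sub>m 1\<^sub>m dB) - N X"

lemma mtrace_add: "A \<in> carrier_mat n n \<Longrightarrow> B \<in> carrier_mat n n \<Longrightarrow> mtrace (A + B) = mtrace A + mtrace B"
  by (simp add: mtrace_def sum.distrib)

lemma mtrace_smult: "A \<in> carrier_mat n n \<Longrightarrow> mtrace (c \<cdot>\<^sub>m A) = c * mtrace A"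
  by (simp add: mtrace_def sum_distrib_left)

lemma mtrace_matrix_unit: "a < d \<Longrightarrow> a' < d \<Longrightarrow> mtrace (matrix_unit d a a') = (if a = a' then 1 else 0)"
  unfolding mtrace_def matrix_unit_def by (auto intro: sum.neutral)

lemma mtrace_outer: "mtrace (outer v) = complex_of_real (\<Sum>i<dim_vec v. (cmod (v$i))^2)"
  using complex_norm_square by (simp add: mtrace_def outer_def of_real_sum)

lemma psd_mtrace_nonneg: "psd n M \<Longrightarrow> 0 \<le> mtrace M"
  unfolding mtrace_def using psd_diag_nonneg[of n M]
  by (auto simp: psd_iff_quad_form_nonneg intro!: sum_nonneg)

lemma mtrace_blocks: "M \<in> carrier_mat (m*d) (m*d) \<Longrightarrow> (\<Sum>p<m. mtrace (block d M p p)) = mtrace M"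
  by (simp add: mtrace_def sum_lessThan_mult_split block_def)

lemma mtrace_id_tensor:
  assumes lin: "lin_map dA dB L"
  shows "mtrace (id_tensor m dA dB L M) = (\<Sum>p<m. mtrace (L (block dA M p p)))"
  using carrier_matD(1)[OF lin_map_carrier[OF lin block_carrier]]
  by (simp add: mtrace_def sum_lessThan_mult_split id_tensor_index index_less id_tensor_def)

lemma lin_map_shifted_map:
  assumes lin: "lin_map dA dB N"
  shows "lin_map dA dB (shifted_map dB N s)"
  unfolding lin_map_def
proof (intro conjI ballI allI)
  fix X Y :: "complex mat" and c assume X: "X \<in> carrier_mat dA dA"
  have NX: "N X \<in> carrier_mat dB dB" using lin_map_carrier[OF lin X] .
  show "shifted_map dB N s X \<in> carrier_mat dB dB"
    unfolding shifted_map_def by (rule minus_carrier_mat[OF NX])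
  show "shifted_map dB N s (c \<cdot>\<^sub>m X) = c \<cdot>\<^sub>m shifted_map dB N s X"
    using NX X lin
    by (intro eq_matI) (auto simp: shifted_map_def lin_map_def mtrace_smult algebra_simps)
  assume Y: "Y \<in> carrier_mat dA dA"
  have NY: "N Y \<in> carrier_mat dB dB" using lin_map_carrier[OF lin Y] .
  have NXY: "N (X + Y) = N X + N Y" using lin X Y by (simp add: lin_map_def)
  show "shifted_map dB N s (X + Y) = shifted_map dB N s X + shifted_map dB N s Y"
    using NX NY X Y by (intro eq_matI) (auto simp: shifted_map_def NXY mtrace_add algebra_simps)
qed

lemma choi_shifted_map:
  assumes lin: "lin_map dA dB N"
  shows "choi dA dB (shifted_map dB N s) = s \<cdot>\<^sub>m 1\<^sub>m (dA*dB) - choi dA dB N"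
proof (rule eq_matI)
  fix K K' assume "K < dim_row (s \<cdot>\<^sub>m 1\<^sub>m (dA*dB) - choi dA dB N)"
    "K' < dim_col (s \<cdot>\<^sub>m 1\<^sub>m (dA*dB) - choi dA dB N)"
  then have K: "K < dA*dB" "K' < dA*dB" by (auto simp: choi_def)
  have "dB > 0" using K by (cases dB) auto
  with K have "K div dB < dA" "K' div dB < dA" "K mod dB < dB" "K' mod dB < dB"
    by (auto simp: less_mult_imp_div_less intro: mod_less_divisor)
  moreover have "N (matrix_unit dA (K div dB) (K' div dB)) \<in> carrier_mat dB dB"
    by (rule lin_map_carrier[OF lin]) simp
  ultimately show "choi dA dB (shifted_map dB N s) $$ (K, K') = (s \<cdot>\<^sub>m 1\<^sub>m (dA*dB) - choi dA dB N) $$ (K, K')"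
    using K by (auto simp: choi_def shifted_map_def mtrace_matrix_unit index_eq_iff[of K K' dB])
qed (auto simp: choi_def)

lemma scaled_unif_chan_minus:
  "(\<lambda>X. complex_of_real t \<cdot>\<^sub>m unif_chan dB X - N X) = shifted_map dB N (complex_of_real t / of_nat dB)"
proof
  fix X
  have "complex_of_real t \<cdot>\<^sub>m unif_chan dB X = (complex_of_real t / of_nat dB) \<cdot>\<^sub>m (mtrace X \<cdot>\<^sub>m 1\<^sub>m dB)"
    by (rule eq_matI) (auto simp: unif_chan_def)
  then show "complex_of_real t \<cdot>\<^sub>m unif_chan dB X - N X = shifted_map dB N (complex_of_real t / of_nat dB) X"
    by (simp add: shifted_map_def)
qed

lemma id_tensor_shifted_map:
  assumes lin: "lin_map dA dB N" and tp: "\<forall>X \<in> carrier_mat dA dA. mtrace (N X) = mtrace X"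
  shows "s \<cdot>\<^sub>m kron (ptrace2 m dB (id_tensor m dA dB N \<psi>)) (1\<^sub>m dB) - id_tensor m dA dB N \<psi>
       = id_tensor m dA dB (shifted_map dB N s) \<psi>"
proof (rule eq_matI)
  fix P Q assume "P < dim_row (id_tensor m dA dB (shifted_map dB N s) \<psi>)"
    "Q < dim_col (id_tensor m dA dB (shifted_map dB N s) \<psi>)"
  then have P: "P < m*dB" and Q: "Q < m*dB" by (auto simp: id_tensor_def)
  have "dB > 0" using P by (cases dB) auto
  with P Q have Pd: "P div dB < m" "Q div dB < m" and Pm: "P mod dB < dB" "Q mod dB < dB"
    by (auto simp: less_mult_imp_div_less intro: mod_less_divisor)
  define B where "B = block dA \<psi> (P div dB) (Q div dB)"
  have NB: "N B \<in> carrier_mat dB dB" by (rule lin_map_carrier[OF lin]) (simp add: B_def)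
  have "ptrace2 m dB (id_tensor m dA dB N \<psi>) $$ (P div dB, Q div dB) = (\<Sum>b<dB. N B $$ (b,b))"
    using Pd by (simp add: ptrace2_def id_tensor_index index_less B_def)
  also have "\<dots> = mtrace (N B)" using NB by (simp add: mtrace_def)
  also have "\<dots> = mtrace B" using tp by (simp add: B_def)
  finally have ptrace: "ptrace2 m dB (id_tensor m dA dB N \<psi>) $$ (P div dB, Q div dB) = mtrace B" .
  show "(s \<cdot>\<^sub>m kron (ptrace2 m dB (id_tensor m dA dB N \<psi>)) (1\<^sub>m dB) - id_tensor m dA dB N \<psi>) $$ (P, Q) =
        id_tensor m dA dB (shifted_map dB N s) \<psi> $$ (P, Q)"
    using P Q Pm NB ptrace
    by (simp add: kron_def ptrace2_def id_tensor_def shifted_map_def B_def[symmetric])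
qed (auto simp: id_tensor_def kron_def ptrace2_def)

lemma mtrace_shifted_map:
  assumes lin: "lin_map dA dB N" and tp: "\<forall>X \<in> carrier_mat dA dA. mtrace (N X) = mtrace X"
    and X: "X \<in> carrier_mat dA dA"
  shows "mtrace (shifted_map dB N s X) = (s * of_nat dB - 1) * mtrace X"
proof -
  have NX: "N X \<in> carrier_mat dB dB" using lin_map_carrier[OF lin X] .
  then have "mtrace (shifted_map dB N s X) = of_nat dB * (s * mtrace X) - mtrace (N X)"
    by (simp add: shifted_map_def mtrace_def sum_subtractf)
  then show ?thesis using tp X by (simp add: algebra_simps)
qed

lemma psd_id_tensor_shifted_map_lower_bound:
  assumes lin: "lin_map dA dB N" and tp: "\<forall>X \<in> carrier_mat dA dA. mtrace (N X) = mtrace X"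
    and \<psi>: "\<psi> \<in> carrier_mat (m*dA) (m*dA)" "mtrace \<psi> = 1" and dB: "dB > 0"
    and P: "psd (m*dB) (id_tensor m dA dB (shifted_map dB N (complex_of_real t)) \<psi>)"
  shows "1 / real dB \<le> t"
proof -
  have "mtrace (id_tensor m dA dB (shifted_map dB N (complex_of_real t)) \<psi>) =
      (\<Sum>p<m. (complex_of_real t * of_nat dB - 1) * mtrace (block dA \<psi> p p))"
    by (simp add: mtrace_id_tensor[OF lin_map_shifted_map[OF lin]] mtrace_shifted_map[OF lin tp])
  also have "\<dots> = complex_of_real (t * real dB - 1)"
    using \<psi> by (simp add: sum_distrib_left[symmetric] mtrace_blocks)
  finally have "0 \<le> complex_of_real (t * real dB - 1)" using psd_mtrace_nonneg[OF P] by simp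
  then have "0 \<le> t * real dB - 1" by (simp only: complex_nonneg_iff Re_complex_of_real)
  then show ?thesis using dB by (simp add: field_simps)
qed

lemma psd_scalar_identity_minus:
  assumes J: "psd n J"
  shows "\<exists>s. psd n (complex_of_real s \<cdot>\<^sub>m 1\<^sub>m n - J)"
proof -
  define s where "s = (\<Sum>i<n. \<Sum>j<n. cmod (J$$(i,j)))"
  have Jc: "J \<in> carrier_mat n n" using J by (simp add: psd_iff_quad_form_nonneg)
  have "psd n (complex_of_real s \<cdot>\<^sub>m 1\<^sub>m n - J)"
    unfolding psd_iff_quad_form_nonneg
  proof (intro conjI ballI)
    show "complex_of_real s \<cdot>\<^sub>m 1\<^sub>m n - J \<in> carrier_mat n n" by (rule minus_carrier_mat[OF Jc])
    fix v :: "complex vec" assume v: "v \<in> carrier_vec n"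
    define N2 where "N2 = (\<Sum>k<n. (cmod (v$k))^2)"
    have entry_bound: "cmod (v$i) * cmod (v$j) \<le> N2" if "i < n" "j < n" for i j
    proof -
      have sq: "(cmod (v$k))^2 \<le> N2" if "k < n" for k
        unfolding N2_def using that by (intro member_le_sum) auto
      show ?thesis
      proof (cases "cmod (v$i) \<le> cmod (v$j)")
        case True
        then have "cmod (v$i) * cmod (v$j) \<le> (cmod (v$j))^2"
          by (simp add: power2_eq_square mult_right_mono)
        then show ?thesis using sq[OF that(2)] by linarith
      next
        case False
        then have "cmod (v$i) * cmod (v$j) \<le> (cmod (v$i))^2"
          by (simp add: power2_eq_square mult_left_mono)
        then show ?thesis using sq[OF that(1)] by linarith
      qed
    qed
    have "quad_form n (complex_of_real s \<cdot>\<^sub>m 1\<^sub>m n - J) v = (\<Sum>i<n. \<Sum>j<n.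
        (if j = i then cnj (v$i) * complex_of_real s * v$i else 0) - cnj (v$i) * J$$(i,j) * v$j)"
      unfolding quad_form_def using Jc by (intro sum.cong refl) (auto simp: algebra_simps)
    also have "\<dots> = (\<Sum>i<n. cnj (v$i) * complex_of_real s * v$i) - quad_form n J v"
      by (simp add: sum_subtractf quad_form_def)
    also have "(\<Sum>i<n. cnj (v$i) * complex_of_real s * v$i) = complex_of_real (s * N2)"
      using complex_norm_square by (simp add: N2_def sum_distrib_left of_real_sum mult_ac)
    finally have eq: "quad_form n (complex_of_real s \<cdot>\<^sub>m 1\<^sub>m n - J) v =
        complex_of_real (s * N2) - quad_form n J v" .
    have "Re (quad_form n J v) \<le> cmod (quad_form n J v)" by (rule complex_Re_le_cmod)
    also have "\<dots> \<le> (\<Sum>i<n. \<Sum>j<n. cmod (cnj (v$i) * J$$(i,j) * v$j))"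
      unfolding quad_form_def by (intro order.trans[OF norm_sum] sum_mono norm_sum)
    also have "\<dots> \<le> (\<Sum>i<n. \<Sum>j<n. cmod (J$$(i,j)) * N2)"
    proof (intro sum_mono)
      fix i j assume "i \<in> {..<n}" "j \<in> {..<n}"
      then have "cmod (J$$(i,j)) * (cmod (v$i) * cmod (v$j)) \<le> cmod (J$$(i,j)) * N2"
        using entry_bound by (intro mult_left_mono) auto
      then show "cmod (cnj (v$i) * J$$(i,j) * v$j) \<le> cmod (J$$(i,j)) * N2"
        by (simp add: norm_mult mult_ac)
    qed
    also have "\<dots> = s * N2" by (simp add: s_def sum_distrib_right)
    finally show "0 \<le> quad_form n (complex_of_real s \<cdot>\<^sub>m 1\<^sub>m n - J) v"
      using J v unfolding eq by (simp add: psd_iff_quad_form_nonneg complex_nonneg_iff)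
  qed
  then show ?thesis by blast
qed

section \<open>The two optimisation problems\<close>

definition choi_levels :: "nat \<Rightarrow> nat \<Rightarrow> (complex mat \<Rightarrow> complex mat) \<Rightarrow> real set" where
  "choi_levels dA dB N = {s. psd (dA*dB) (complex_of_real s \<cdot>\<^sub>m 1\<^sub>m (dA*dB) - choi dA dB N)}"

definition hmin_levels ::
    "nat \<Rightarrow> nat \<Rightarrow> nat \<Rightarrow> (complex mat \<Rightarrow> complex mat) \<Rightarrow> complex mat \<Rightarrow> real set" where
  "hmin_levels m dA dB N \<psi> = {t. loewner_le (m*dB) (id_tensor m dA dB N \<psi>)
      (complex_of_real t \<cdot>\<^sub>m kron (ptrace2 m dB (id_tensor m dA dB N \<psi>)) (1\<^sub>m dB))}"

definition max_entangled :: "nat \<Rightarrow> complex vec" where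
  "max_entangled d = diag_vec d (complex_of_real (1 / sqrt (real d)))"

lemma Hmin_id_tensor: "Hmin m dB (id_tensor m dA dB N \<psi>) = - log 2 (Inf (hmin_levels m dA dB N \<psi>))"
  by (simp add: Hmin_def Dmax_def hmin_levels_def)

lemma Pure_imp_psd_trace_one:
  assumes "\<psi> \<in> Pure dR dA"
  shows "psd (dR*dA) \<psi>" "mtrace \<psi> = 1"
  using assms by (auto simp: Pure_def psd_outer mtrace_outer)

lemma max_entangled_Pure:
  assumes "d > 0"
  shows "outer (max_entangled d) \<in> Pure d d"
proof -
  have "(\<Sum>i<d*d. (cmod (max_entangled d $ i))^2) = (\<Sum>q<d. \<Sum>a<d. if q = a then 1 / real d else 0)"
    unfolding sum_lessThan_mult_split
    by (intro sum.cong refl) (simp add: max_entangled_def diag_vec_def index_less norm_divide power_divide)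
  also have "\<dots> = 1" using assms by simp
  finally show ?thesis by (auto simp: Pure_def max_entangled_def diag_vec_def)
qed

lemma choi_levels_iff_CP:
  assumes "lin_map dA dB N"
  shows "s \<in> choi_levels dA dB N \<longleftrightarrow> CP dA dB (shifted_map dB N (complex_of_real s))"
  by (simp add: choi_levels_def CP_iff_choi_psd lin_map_shifted_map choi_shifted_map assms)

lemma hmin_levels_iff:
  assumes lin: "lin_map dA dB N" and tp: "\<forall>X \<in> carrier_mat dA dA. mtrace (N X) = mtrace X"
  shows "t \<in> hmin_levels m dA dB N \<psi> \<longleftrightarrow>
    psd (m*dB) (id_tensor m dA dB (shifted_map dB N (complex_of_real t)) \<psi>)"
proof -
  have "complex_of_real t \<cdot>\<^sub>m kron (ptrace2 m dB (id_tensor m dA dB N \<psi>)) (1\<^sub>m dB)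
      \<in> carrier_mat (m*dB) (m*dB)"
    by (simp add: kron_def ptrace2_def)
  then show ?thesis
    unfolding hmin_levels_def loewner_le_def by (simp add: id_tensor_shifted_map[OF lin tp])
qed

lemma choi_levels_subset_hmin_levels:
  assumes lin: "lin_map dA dB N" and tp: "\<forall>X \<in> carrier_mat dA dA. mtrace (N X) = mtrace X"
    and \<psi>: "psd (m*dA) \<psi>"
  shows "choi_levels dA dB N \<subseteq> hmin_levels m dA dB N \<psi>"
  using \<psi> by (auto simp: choi_levels_iff_CP[OF lin] hmin_levels_iff[OF lin tp] CP_def)

lemma hmin_levels_max_entangled:
  assumes lin: "lin_map d dB N" and tp: "\<forall>X \<in> carrier_mat d d. mtrace (N X) = mtrace X"
    and "d > 0"
  shows "hmin_levels d d dB N (outer (max_entangled d)) = choi_levels d dB N"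
proof -
  have "complex_of_real (1 / sqrt (real d)) \<noteq> 0" using assms(3) by simp
  from psd_id_tensor_diag_vec_iff[OF lin_map_shifted_map[OF lin] this]
  show ?thesis
    unfolding set_eq_iff hmin_levels_iff[OF lin tp] max_entangled_def
    by (simp add: choi_levels_def choi_shifted_map[OF lin])
qed

lemma hmin_levels_lower_bound:
  assumes lin: "lin_map dA dB N" and tp: "\<forall>X \<in> carrier_mat dA dA. mtrace (N X) = mtrace X"
    and "psd (m*dA) \<psi>" "mtrace \<psi> = 1" "dB > 0" and "t \<in> hmin_levels m dA dB N \<psi>"
  shows "1 / real dB \<le> t"
  using assms psd_id_tensor_shifted_map_lower_bound[OF lin tp]
  by (auto simp: hmin_levels_iff[OF lin tp] psd_iff_quad_form_nonneg)

lemma choi_levels_nonempty: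
  assumes "CP dA dB N"
  shows "choi_levels dA dB N \<noteq> {}"
proof -
  have "psd (dA*dB) (choi dA dB N)" using assms CP_iff_choi_psd CP_def by blast
  then obtain s where "psd (dA*dB) (complex_of_real s \<cdot>\<^sub>m 1\<^sub>m (dA*dB) - choi dA dB N)"
    using psd_scalar_identity_minus by blast
  then show ?thesis by (auto simp: choi_levels_def)
qed

lemma Dmax_chan_eq_Inf_choi_levels:
  assumes lin: "lin_map dA dB N" and dB: "dB > 0"
    and ne: "choi_levels dA dB N \<noteq> {}" and nonneg: "\<forall>s \<in> choi_levels dA dB N. 0 \<le> s"
  shows "Dmax_chan dA dB N = log 2 (real dB * Inf (choi_levels dA dB N))"
proof -
  let ?C = "choi_levels dA dB N"
  have feasible_iff: "t \<ge> 0 \<and> CP dA dB (\<lambda>X. complex_of_real t \<cdot>\<^sub>m unif_chan dB X - N X) \<longleftrightarrow> t / real dB \<in> ?C"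
    for t
  proof -
    have "complex_of_real t / of_nat dB = complex_of_real (t / real dB)" by simp
    then have "CP dA dB (\<lambda>X. complex_of_real t \<cdot>\<^sub>m unif_chan dB X - N X) \<longleftrightarrow> t / real dB \<in> ?C"
      by (simp only: scaled_unif_chan_minus choi_levels_iff_CP[OF lin])
    moreover have "t / real dB \<in> ?C \<Longrightarrow> t \<ge> 0" using nonneg dB by (auto simp: zero_le_divide_iff)
    ultimately show ?thesis by blast
  qed
  have "{t. t \<ge> 0 \<and> CP dA dB (\<lambda>X. complex_of_real t \<cdot>\<^sub>m unif_chan dB X - N X)} = (\<lambda>s. real dB * s) ` ?C"
  proof (intro subset_antisym subsetI)
    fix t assume "t \<in> {t. t \<ge> 0 \<and> CP dA dB (\<lambda>X. complex_of_real t \<cdot>\<^sub>m unif_chan dB X - N X)}"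
    then have "t / real dB \<in> ?C" using feasible_iff by blast
    then show "t \<in> (\<lambda>s. real dB * s) ` ?C" using dB by (intro image_eqI[where x = "t / real dB"]) auto
  next
    fix t assume "t \<in> (\<lambda>s. real dB * s) ` ?C"
    then obtain s where "s \<in> ?C" "t = real dB * s" by blast
    then show "t \<in> {t. t \<ge> 0 \<and> CP dA dB (\<lambda>X. complex_of_real t \<cdot>\<^sub>m unif_chan dB X - N X)}"
      using feasible_iff dB by simp
  qed
  moreover have "real dB * Inf ?C = Inf ((\<lambda>s. real dB * s) ` ?C)"
  proof (rule continuous_at_Inf_mono)
    show "mono (\<lambda>s. real dB * s)" by (simp add: mono_def mult_left_mono)
    show "continuous (at_right (Inf ?C)) (\<lambda>s. real dB * s)" by (intro continuous_intros)
    show "bdd_below ?C" using nonneg by (intro bdd_belowI) auto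
  qed (rule ne)
  ultimately show ?thesis by (simp add: Dmax_chan_def)
qed

lemma Inf_hmin_levels_bounds:
  assumes lin: "lin_map dA dB N" and tp: "\<forall>X \<in> carrier_mat dA dA. mtrace (N X) = mtrace X"
    and cp: "CP dA dB N" and dB: "dB > 0" and \<psi>: "psd (m*dA) \<psi>" "mtrace \<psi> = 1"
  shows "1 / real dB \<le> Inf (hmin_levels m dA dB N \<psi>)"
    and "Inf (hmin_levels m dA dB N \<psi>) \<le> Inf (choi_levels dA dB N)"
proof -
  have ne: "choi_levels dA dB N \<noteq> {}" by (rule choi_levels_nonempty[OF cp])
  have subset: "choi_levels dA dB N \<subseteq> hmin_levels m dA dB N \<psi>"
    by (rule choi_levels_subset_hmin_levels[OF lin tp \<psi>(1)])
  have lower: "\<And>t. t \<in> hmin_levels m dA dB N \<psi> \<Longrightarrow> 1 / real dB \<le> t"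
    using hmin_levels_lower_bound[OF lin tp \<psi> dB] .
  show "1 / real dB \<le> Inf (hmin_levels m dA dB N \<psi>)"
    using ne subset lower by (intro cInf_greatest) auto
  show "Inf (hmin_levels m dA dB N \<psi>) \<le> Inf (choi_levels dA dB N)"
    using lower by (intro cInf_superset_mono[OF ne _ subset] bdd_belowI)
qed

lemma log_dim_minus_Dmax_chan:
  assumes dA: "dA > 0" and dB: "dB > 0" and N: "CPTP dA dB N"
  shows "log 2 (real dB) - Dmax_chan dA dB N = - log 2 (Inf (choi_levels dA dB N))"
proof -
  have cp: "CP dA dB N" and lin: "lin_map dA dB N" and tp: "\<forall>X \<in> carrier_mat dA dA. mtrace (N X) = mtrace X"
    using N by (auto simp: CPTP_def CP_def)
  let ?C = "choi_levels dA dB N" and ?\<psi> = "outer (max_entangled dA)"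
  have \<psi>: "psd (dA*dA) ?\<psi>" "mtrace ?\<psi> = 1"
    using Pure_imp_psd_trace_one max_entangled_Pure[OF dA] by auto
  have C_eq: "hmin_levels dA dA dB N ?\<psi> = ?C" by (rule hmin_levels_max_entangled[OF lin tp dA])
  have pos: "0 < 1 / real dB" using dB by simp
  have "\<forall>s \<in> ?C. 0 \<le> s"
    using hmin_levels_lower_bound[OF lin tp \<psi> dB] pos unfolding C_eq by (meson less_imp_le order_trans)
  moreover have "0 < Inf ?C"
    using Inf_hmin_levels_bounds(1)[OF lin tp cp dB \<psi>] pos unfolding C_eq by linarith
  ultimately show ?thesis
    using Dmax_chan_eq_Inf_choi_levels[OF lin dB choi_levels_nonempty[OF cp]] dB
    by (simp add: log_mult)
qed

theorem mainTheorem13: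
  fixes dA dB :: nat and N :: "complex mat \<Rightarrow> complex mat"
  assumes "dA > 0" and "dB > 0" and "CPTP dA dB N"
  shows "(\<exists>\<psi> \<in> Pure dA dA. Hmin dA dB (id_tensor dA dA dB N \<psi>) = log 2 (real dB) - Dmax_chan dA dB N)
       \<and> (\<forall>\<psi> \<in> Pure dA dA. log 2 (real dB) - Dmax_chan dA dB N \<le> Hmin dA dB (id_tensor dA dA dB N \<psi>))"
proof -
  have cp: "CP dA dB N" and lin: "lin_map dA dB N" and tp: "\<forall>X \<in> carrier_mat dA dA. mtrace (N X) = mtrace X"
    using assms(3) by (auto simp: CPTP_def CP_def)
  note gap = log_dim_minus_Dmax_chan[OF assms]
  show ?thesis
  proof (intro conjI ballI bexI)
    show "outer (max_entangled dA) \<in> Pure dA dA" by (rule max_entangled_Pure[OF assms(1)])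
    show "Hmin dA dB (id_tensor dA dA dB N (outer (max_entangled dA))) = log 2 (real dB) - Dmax_chan dA dB N"
      by (simp add: Hmin_id_tensor gap hmin_levels_max_entangled[OF lin tp assms(1)])
  next
    fix \<psi> assume "\<psi> \<in> Pure dA dA"
    note bounds = Inf_hmin_levels_bounds[OF lin tp cp assms(2) Pure_imp_psd_trace_one[OF this]]
    have "0 < 1 / real dB" using assms(2) by simp
    then have "0 < Inf (hmin_levels dA dA dB N \<psi>)" using bounds(1) by linarith
    then show "log 2 (real dB) - Dmax_chan dA dB N \<le> Hmin dA dB (id_tensor dA dA dB N \<psi>)"
      using bounds(2) by (simp add: Hmin_id_tensor gap)
  qed
qed

end
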